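(* Let $z\in\mathbb{C}$, $x=e^{2\pi iz}$, and let $\omega_0,\dots,\omega_r\in\mathbb{C}$ with $\omega_0,\dots,\omega_r,\omega_0+\omega_1\in\mathbb{C}\setminus\mathbb{R}$, $q_j=e^{2\pi i\omega_j}$. Then $$\frac{(x|q_0,q_1,q_2,\dots,q_r)_\infty}{(x|q_0,q_0q_1,q_2,\dots,q_r)_\infty}=(x|q_1^{-1},q_0q_1,q_2,\dots,q_r)_\infty^{-1}.$$
   Context: q-shifted factorial: for $q_j=e^{2\pi i\omega_j}$ with $\omega_j\in\mathbb{C}\setminus\mathbb{R}$: if all $|q_j|<1$, $(x|q_0,\dots,q_r)_\infty=\prod_{j_0,\dots,j_r\ge0}(1-xq_0^{j_0}\cdots q_r^{j_r})$; in general (the expression is symmetric in the $q_j$), if $|q_0|,\dots,|q_{k-1}|>1$ and $|q_k|,\dots,|q_r|<1$, $(x|\underline q)_\infty=\big((q_0\cdots q_{k-1})^{-1}x\,|\,q_0^{-1},\dots,q_{k-1}^{-1},q_k,\dots,q_r\big)_\infty^{(-1)^k}$, the latter product being absolutely convergent. *)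

theory Defs
  imports "HOL-Analysis.Analysis"
begin

definition multi_idx :: "nat \<Rightarrow> nat \<Rightarrow> nat list set" where
  "multi_idx n N = {js. length js = n \<and> set js \<subseteq> {..<N}}"

definition qpoch_box :: "complex \<Rightarrow> complex list \<Rightarrow> nat \<Rightarrow> complex" where
  "qpoch_box x qs N =
     (\<Prod>js\<in>multi_idx (length qs) N. 1 - x * prod_list (map2 (\<lambda>q j. q ^ j) qs js))"

text \<open>The (absolutely convergent, when all |q_j| < 1) infinite product
  prod_{j_0,...,j_r >= 0} (1 - x q_0^j_0 ... q_r^j_r), as the limit of box partial products.\<close>
definition qpoch_conv :: "complex \<Rightarrow> complex list \<Rightarrow> complex" where
  "qpoch_conv x qs = lim (qpoch_box x qs)"

definition qpoch :: "complex \<Rightarrow> complex list \<Rightarrow> complex" where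
  "qpoch x qs =
     (let big = filter (\<lambda>q. norm q > 1) qs;
          qs' = map (\<lambda>q. if norm q > 1 then inverse q else q) qs;
          x' = inverse (prod_list big) * x
      in if even (length big) then qpoch_conv x' qs' else inverse (qpoch_conv x' qs'))"

end

theory Submission
  imports Defs
begin

text \<open>For |a|, |b| < 1 split the exponents (i, j) of a and b in the defining product into the
  parts j \<le> i and i < j. The substitutions i = k + j and j = i + m + 1 turn the factors
  1 - x a^i b^j \<dots> of these parts into those of (x | a, ab, \<dots>) and of (bx | b, ab, \<dots>); since
  the product converges absolutely, as a limit over finite sets of indices, it may be so
  rearranged, giving (x | a, b, \<dots>) = (x | a, ab, \<dots>) (bx | b, ab, \<dots>).
  The general factorial is symmetric in its first two parameters and satisfies
  (x | c^-1, \<dots>) = (cx | c, \<dots>)^-1, and these two rules carry the identity over to all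
  configurations of |a|, |b|, |ab| \<noteq> 1. For a = q_0, b = q_1 the second rule rewrites
  (bx | b, ab, \<dots>) as (x | q_1^-1, q_0 q_1, \<dots>)^-1.\<close>

lemma norm_prod_one_plus_minus1_le:
  fixes f :: "'b \<Rightarrow> 'a :: {real_normed_div_algebra, comm_ring_1}"
  shows "norm (prod (\<lambda>j. 1 + f j) A - 1) \<le> prod (\<lambda>j. 1 + norm (f j)) A - 1"
proof (cases "finite A")
  case True
  then obtain h where h: "bij_betw h {..<card A} A"
    using ex_bij_betw_nat_finite atLeast0LessThan by metis
  show ?thesis
    using norm_prod_minus1_le_prod_minus1[of "f \<circ> h" "{..<card A}"]
    by (simp add: prod.reindex_bij_betw[OF h, symmetric])
qed simp

lemma norm_prod_diff_subset_le:
  fixes f :: "'b \<Rightarrow> 'a :: real_normed_field"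
  assumes "finite F" "F' \<subseteq> F"
  shows "norm (prod f F - prod f F') \<le>
     exp (\<Sum>j\<in>F'. norm (f j - 1)) * (exp (\<Sum>j\<in>F - F'. norm (f j - 1)) - 1)"
proof -
  have "prod f F - prod f F' = prod f F' * (prod (\<lambda>j. 1 + (f j - 1)) (F - F') - 1)"
    using prod.subset_diff[OF assms(2,1), of f] by (simp add: algebra_simps)
  also have "norm \<dots> \<le> exp (\<Sum>j\<in>F'. norm (f j - 1)) * (exp (\<Sum>j\<in>F - F'. norm (f j - 1)) - 1)"
    unfolding norm_mult
  proof (rule mult_mono)
    have "norm (prod f F') \<le> (\<Prod>j\<in>F'. 1 + norm (f j - 1))"
      using norm_prod_le[of f F'] prod_mono[of F' "\<lambda>j. norm (f j)" "\<lambda>j. 1 + norm (f j - 1)"]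
        norm_triangle_ineq[of 1 "f _ - 1"] by fastforce
    also have "\<dots> \<le> exp (\<Sum>j\<in>F'. norm (f j - 1))"
      by (rule prod_le_exp_sum) simp
    finally show "norm (prod f F') \<le> exp (\<Sum>j\<in>F'. norm (f j - 1))" .
    show "norm (prod (\<lambda>j. 1 + (f j - 1)) (F - F') - 1) \<le> exp (\<Sum>j\<in>F - F'. norm (f j - 1)) - 1"
      using norm_prod_one_plus_minus1_le[of "\<lambda>j. f j - 1" "F - F'"]
        prod_le_exp_sum[of "F - F'" "\<lambda>j. norm (f j - 1)"] by simp
  qed auto
  finally show ?thesis .
qed

lemma prod_finite_subsets_convergent:
  fixes f :: "'b \<Rightarrow> 'a :: {real_normed_field, banach}"
  assumes "(\<lambda>j. norm (f j - 1)) summable_on A"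
  shows "\<exists>p. (prod f \<longlongrightarrow> p) (finite_subsets_at_top A)"
proof -
  define g where "g j = norm (f j - 1)" for j
  obtain L where L: "(g has_sum L) A"
    using assms unfolding summable_on_def g_def by blast
  have sum_le_L: "sum g F \<le> L" if "finite F" "F \<subseteq> A" for F
    using finite_sum_le_has_sum[OF L that] by (simp add: g_def)
  have "\<exists>P. eventually P (finite_subsets_at_top A) \<and>
          (\<forall>F1 F2. P F1 \<and> P F2 \<longrightarrow> dist (prod f F1) (prod f F2) < e)" if "e > 0" for e
  proof -
    define d where "d = ln (1 + e / (4 * exp L))"
    have "d > 0" using \<open>e > 0\<close> by (simp add: d_def ln_gt_zero)
    have exp_d: "exp L * (exp d - 1) = e / 4"
      using \<open>e > 0\<close> by (simp add: d_def add_pos_pos)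
    have "eventually (\<lambda>F. dist (sum g F) L < d) (finite_subsets_at_top A)"
      using L \<open>d > 0\<close> unfolding has_sum_def tendsto_iff by blast
    then obtain F0 where F0: "finite F0" "F0 \<subseteq> A" "dist (sum g F0) L < d"
      unfolding eventually_finite_subsets_at_top by blast
    define P where "P F \<longleftrightarrow> finite F \<and> F0 \<subseteq> F \<and> F \<subseteq> A" for F
    have close_F0: "dist (prod f F) (prod f F0) \<le> e / 4" if "P F" for F
    proof -
      have "sum g F = sum g F0 + sum g (F - F0)"
        using that sum.subset_diff[of F0 F g] by (simp add: P_def)
      then have tail: "sum g (F - F0) < d"
        using sum_le_L[of F] F0(3) that by (auto simp: P_def dist_real_def)
      have "dist (prod f F) (prod f F0) \<le> exp (sum g F0) * (exp (sum g (F - F0)) - 1)"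
        using norm_prod_diff_subset_le[of F F0 f] that by (simp add: P_def dist_norm g_def)
      also have "\<dots> \<le> exp L * (exp d - 1)"
        using sum_le_L[OF F0(1,2)] tail sum_nonneg[of "F - F0" g]
        by (intro mult_mono) (auto simp: g_def)
      finally show ?thesis by (simp add: exp_d)
    qed
    have "eventually P (finite_subsets_at_top A)"
      unfolding P_def eventually_finite_subsets_at_top using F0 by blast
    moreover have "dist (prod f F1) (prod f F2) < e" if "P F1" "P F2" for F1 F2
      using dist_triangle3[of "prod f F1" "prod f F2" "prod f F0"] close_F0[OF that(1)]
        close_F0[OF that(2)] \<open>e > 0\<close> by (simp add: dist_commute)
    ultimately show ?thesis by blast
  qed
  then have "cauchy_filter (filtermap (prod f) (finite_subsets_at_top A))"
    by (simp add: cauchy_filter_metric_filtermap)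
  then show ?thesis
    using complete_uniform[where S = UNIV] complete_UNIV by (force simp: filterlim_def)
qed

lemma tendsto_prod_finite_subsets_reindex:
  assumes "inj_on h A" "\<And>j. j \<in> A \<Longrightarrow> g (h j) = f j"
  shows "(prod g \<longlongrightarrow> p) (finite_subsets_at_top (h ` A)) \<longleftrightarrow>
         (prod f \<longlongrightarrow> p) (finite_subsets_at_top A)"
proof -
  have "(prod g \<longlongrightarrow> p) (finite_subsets_at_top (h ` A)) \<longleftrightarrow>
        ((\<lambda>F. prod g (h ` F)) \<longlongrightarrow> p) (finite_subsets_at_top A)"
    by (metis assms(1) filterlim_filtermap filtermap_image_finite_subsets_at_top)
  also have "\<dots> \<longleftrightarrow> (prod f \<longlongrightarrow> p) (finite_subsets_at_top A)"
  proof (intro tendsto_cong eventually_finite_subsets_at_top_weakI)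
    fix F assume "finite F" "F \<subseteq> A"
    then show "prod g (h ` F) = prod f F"
      using assms by (subst prod.reindex) (auto intro: inj_on_subset intro!: prod.cong)
  qed
  finally show ?thesis .
qed

lemma tendsto_prod_finite_subsets_Un_disjoint:
  fixes f :: "'b \<Rightarrow> 'a :: {real_normed_algebra, comm_monoid_mult}"
  assumes "(prod f \<longlongrightarrow> a) (finite_subsets_at_top A)" "(prod f \<longlongrightarrow> b) (finite_subsets_at_top B)"
    and "A \<inter> B = {}"
  shows "(prod f \<longlongrightarrow> a * b) (finite_subsets_at_top (A \<union> B))"
proof -
  have restrict: "((\<lambda>F. prod f (F \<inter> C)) \<longlongrightarrow> c) (finite_subsets_at_top (A \<union> B))"
    if "(prod f \<longlongrightarrow> c) (finite_subsets_at_top C)" "C \<subseteq> A \<union> B" for C c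
  proof -
    have "filterlim (\<lambda>F. F \<inter> C) (finite_subsets_at_top C) (finite_subsets_at_top (A \<union> B))"
      unfolding filterlim_finite_subsets_at_top eventually_finite_subsets_at_top
      using that(2) by blast
    from filterlim_compose[OF that(1) this] show ?thesis by (simp add: o_def)
  qed
  have "((\<lambda>F. prod f (F \<inter> A) * prod f (F \<inter> B)) \<longlongrightarrow> a * b) (finite_subsets_at_top (A \<union> B))"
    by (intro tendsto_mult restrict assms(1,2)) auto
  moreover have "eventually (\<lambda>F. prod f (F \<inter> A) * prod f (F \<inter> B) = prod f F)
                   (finite_subsets_at_top (A \<union> B))"
  proof (rule eventually_finite_subsets_at_top_weakI)
    fix F assume "finite F" "F \<subseteq> A \<union> B"
    then have "F = (F \<inter> A) \<union> (F \<inter> B)" by auto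
    then show "prod f (F \<inter> A) * prod f (F \<inter> B) = prod f F"
      using \<open>finite F\<close> assms(3) by (metis prod.union_disjoint finite_Int inf_assoc inf_bot_right inf_commute)
  qed
  ultimately show ?thesis by (rule Lim_transform_eventually)
qed

definition multi_indices :: "nat \<Rightarrow> nat list set" where
  "multi_indices n = {js. length js = n}"

definition qmonomial :: "'a :: monoid_mult list \<Rightarrow> nat list \<Rightarrow> 'a" where
  "qmonomial qs js = prod_list (map2 (\<lambda>q j. q ^ j) qs js)"

definition qfactor :: "complex \<Rightarrow> complex list \<Rightarrow> nat list \<Rightarrow> complex" where
  "qfactor x qs js = 1 - x * qmonomial qs js"

lemma qmonomial_Cons [simp]: "qmonomial (q # qs) (j # js) = q ^ j * qmonomial qs js"
  by (simp add: qmonomial_def)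

lemma norm_qmonomial:
  fixes qs :: "'a :: real_normed_div_algebra list"
  shows "norm (qmonomial qs js) = qmonomial (map norm qs) js"
proof (induction qs arbitrary: js)
  case (Cons q qs)
  then show ?case by (cases js) (simp_all add: qmonomial_def norm_mult norm_power)
qed (simp add: qmonomial_def)

lemma qpoch_box_eq: "qpoch_box x qs N = prod (qfactor x qs) (multi_idx (length qs) N)"
  by (simp add: qpoch_box_def qfactor_def qmonomial_def)

lemma multi_idx_0 [simp]: "multi_idx 0 N = {[]}"
  by (auto simp: multi_idx_def)

lemma multi_idx_Suc: "multi_idx (Suc n) N = (\<lambda>(j, js). j # js) ` ({..<N} \<times> multi_idx n N)"
  by (auto simp: multi_idx_def length_Suc_conv)

lemma multi_idx_Suc_Suc:
  "multi_idx (Suc (Suc n)) N = (\<lambda>(i, j, js). i # j # js) ` ({..<N} \<times> {..<N} \<times> multi_idx n N)"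
  by (auto simp: multi_idx_def length_Suc_conv image_iff)

lemma multi_indices_Suc_Suc:
  "multi_indices (Suc (Suc n)) = (\<lambda>(i, j, js). i # j # js) ` (UNIV \<times> UNIV \<times> multi_indices n)"
  by (auto simp: multi_indices_def length_Suc_conv image_iff)

lemma multi_idx_mono: "N \<le> M \<Longrightarrow> multi_idx n N \<subseteq> multi_idx n M"
  by (auto simp: multi_idx_def)

lemma multi_idx_subset_multi_indices: "multi_idx n N \<subseteq> multi_indices n"
  by (auto simp: multi_idx_def multi_indices_def)

lemma finite_multi_idx: "finite (multi_idx n N)"
  by (induction n) (simp_all add: multi_idx_Suc)

lemma finite_subset_multi_idx:
  assumes "finite X" "X \<subseteq> multi_indices n"
  obtains N where "X \<subseteq> multi_idx n N"
proof -
  obtain N where "(\<Union>js\<in>X. set js) \<subseteq> {..<N}"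
    using finite_nat_bounded assms(1) by (metis List.finite_set finite_UN)
  with assms(2) have "X \<subseteq> multi_idx n N"
    by (auto simp: multi_idx_def multi_indices_def)
  then show thesis by (rule that)
qed

lemma filterlim_multi_idx:
  "filterlim (multi_idx n) (finite_subsets_at_top (multi_indices n)) sequentially"
  unfolding filterlim_finite_subsets_at_top
proof (intro allI impI)
  fix X assume "finite X \<and> X \<subseteq> multi_indices n"
  then obtain N where "X \<subseteq> multi_idx n N"
    using finite_subset_multi_idx by blast
  then have "finite (multi_idx n M) \<and> X \<subseteq> multi_idx n M \<and> multi_idx n M \<subseteq> multi_indices n"
    if "N \<le> M" for M
    using that multi_idx_mono[OF that] by (auto simp: finite_multi_idx multi_idx_subset_multi_indices)
  then show "eventually (\<lambda>M. finite (multi_idx n M) \<and> X \<subseteq> multi_idx n M \<and>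
                           multi_idx n M \<subseteq> multi_indices n) sequentially"
    unfolding eventually_sequentially by blast
qed

lemma sum_qmonomial_multi_idx:
  fixes qs :: "'a :: comm_semiring_1 list"
  shows "(\<Sum>js\<in>multi_idx (length qs) N. qmonomial qs js) = (\<Prod>q\<leftarrow>qs. \<Sum>j<N. q ^ j)"
proof (induction qs)
  case Nil
  then show ?case by (simp add: qmonomial_def)
next
  case (Cons q qs)
  have "(\<Sum>js\<in>multi_idx (length (q # qs)) N. qmonomial (q # qs) js)
        = (\<Sum>(j, js)\<in>{..<N} \<times> multi_idx (length qs) N. q ^ j * qmonomial qs js)"
    unfolding length_Cons multi_idx_Suc
    by (subst sum.reindex) (auto simp: inj_on_def intro!: sum.cong)
  also have "\<dots> = (\<Sum>j<N. q ^ j) * (\<Sum>js\<in>multi_idx (length qs) N. qmonomial qs js)"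
    by (simp add: sum_product sum.cartesian_product)
  finally show ?case by (simp add: Cons.IH)
qed

lemma prod_geometric_partial_le:
  fixes rs :: "real list"
  assumes "\<forall>r\<in>set rs. 0 \<le> r \<and> r < 1"
  shows "(\<Prod>r\<leftarrow>rs. \<Sum>j<N. r ^ j) \<le> (\<Prod>r\<leftarrow>rs. 1 / (1 - r))"
  using assms
proof (induction rs)
  case (Cons r rs)
  have "(\<Sum>j<N. r ^ j) \<le> 1 / (1 - r)"
    using Cons.prems sum_le_suminf[OF summable_geometric[of r], of "{..<N}"] suminf_geometric[of r]
    by simp
  moreover have "0 \<le> (\<Prod>r\<leftarrow>rs. \<Sum>j<N. r ^ j)"
    using Cons.prems by (intro prod_list_nonneg) (auto intro!: sum_nonneg)
  ultimately have "(\<Sum>j<N. r ^ j) * (\<Prod>r\<leftarrow>rs. \<Sum>j<N. r ^ j) \<le> 1 / (1 - r) * (\<Prod>r\<leftarrow>rs. 1 / (1 - r))"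
    using Cons by (intro mult_mono) auto
  then show ?case by simp
qed simp

lemma summable_on_qfactor:
  assumes "\<forall>q\<in>set qs. norm q < 1"
  shows "(\<lambda>js. norm (qfactor x qs js - 1)) summable_on multi_indices (length qs)"
proof (rule nonneg_bdd_above_summable_on)
  define C where "C = norm x * (\<Prod>r\<leftarrow>map norm qs. 1 / (1 - r))"
  show "bdd_above (sum (\<lambda>js. norm (qfactor x qs js - 1)) `
                   {F. F \<subseteq> multi_indices (length qs) \<and> finite F})"
  proof (rule bdd_aboveI2)
    fix F assume "F \<in> {F. F \<subseteq> multi_indices (length qs) \<and> finite F}"
    then obtain N where N: "F \<subseteq> multi_idx (length qs) N"
      using finite_subset_multi_idx by blast
    have "(\<Sum>js\<in>F. norm (qfactor x qs js - 1)) = norm x * (\<Sum>js\<in>F. qmonomial (map norm qs) js)"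
      by (simp add: qfactor_def norm_mult norm_qmonomial sum_distrib_left)
    also have "\<dots> \<le> norm x * (\<Sum>js\<in>multi_idx (length qs) N. qmonomial (map norm qs) js)"
      using N by (intro mult_left_mono sum_mono2 finite_multi_idx)
        (auto simp flip: norm_qmonomial)
    also have "\<dots> \<le> C"
      using sum_qmonomial_multi_idx[of "map norm qs" N] prod_geometric_partial_le[of "map norm qs" N]
        assms by (auto simp: C_def intro!: mult_left_mono)
    finally show "(\<Sum>js\<in>F. norm (qfactor x qs js - 1)) \<le> C" .
  qed
qed simp

lemma tendsto_qpoch_conv:
  assumes "\<forall>q\<in>set qs. norm q < 1"
  shows "(prod (qfactor x qs) \<longlongrightarrow> qpoch_conv x qs) (finite_subsets_at_top (multi_indices (length qs)))"
proof -
  obtain p where p: "(prod (qfactor x qs) \<longlongrightarrow> p) (finite_subsets_at_top (multi_indices (length qs)))"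
    using prod_finite_subsets_convergent[OF summable_on_qfactor[OF assms]] by blast
  have "qpoch_box x qs = (\<lambda>N. prod (qfactor x qs) (multi_idx (length qs) N))"
    by (simp add: fun_eq_iff qpoch_box_eq)
  then have "qpoch_box x qs \<longlonglongrightarrow> p"
    using filterlim_compose[OF p filterlim_multi_idx] by (simp add: o_def)
  then have "qpoch_conv x qs = p"
    unfolding qpoch_conv_def by (rule limI)
  with p show ?thesis by simp
qed

lemma qpoch_box_Cons2:
  "qpoch_box x (a # b # qs) N =
     (\<Prod>i<N. \<Prod>j<N. \<Prod>js\<in>multi_idx (length qs) N. 1 - x * (a ^ i * (b ^ j * qmonomial qs js)))"
proof -
  have "qpoch_box x (a # b # qs) N =
        (\<Prod>(i, j, js)\<in>{..<N} \<times> {..<N} \<times> multi_idx (length qs) N.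
           1 - x * (a ^ i * (b ^ j * qmonomial qs js)))"
    unfolding qpoch_box_eq length_Cons multi_idx_Suc_Suc
    by (subst prod.reindex) (auto simp: inj_on_def qfactor_def intro!: prod.cong)
  then show ?thesis
    by (simp add: prod.cartesian_product)
qed

lemma qpoch_conv_swap: "qpoch_conv x (b # a # qs) = qpoch_conv x (a # b # qs)"
proof -
  have "qpoch_box x (b # a # qs) = qpoch_box x (a # b # qs)"
    unfolding fun_eq_iff qpoch_box_Cons2 by (subst prod.swap) (simp add: mult.left_commute)
  then show ?thesis by (simp add: qpoch_conv_def)
qed

lemma tendsto_qpoch_conv_Cons2:
  assumes "\<forall>q\<in>set (a # b # qs). norm q < 1"
  shows "(prod (\<lambda>(i, j, js). 1 - x * (a ^ i * (b ^ j * qmonomial qs js))) \<longlongrightarrow> qpoch_conv x (a # b # qs))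
           (finite_subsets_at_top (UNIV \<times> UNIV \<times> multi_indices (length qs)))"
proof -
  have "(prod (qfactor x (a # b # qs)) \<longlongrightarrow> qpoch_conv x (a # b # qs))
          (finite_subsets_at_top ((\<lambda>(i, j, js). i # j # js) ` (UNIV \<times> UNIV \<times> multi_indices (length qs))))"
    using tendsto_qpoch_conv[OF assms, of x] by (simp add: multi_indices_Suc_Suc)
  then show ?thesis
    by (subst (asm) tendsto_prod_finite_subsets_reindex) (auto simp: inj_on_def qfactor_def)
qed

lemma qpoch_conv_split:
  assumes "norm a < 1" "norm b < 1" "\<forall>q\<in>set qs. norm q < 1"
  shows "qpoch_conv x (a # b # qs) = qpoch_conv x (a # a * b # qs) * qpoch_conv (b * x) (b # a * b # qs)"
proof -
  define U :: "(nat \<times> nat \<times> nat list) set" where "U = UNIV \<times> UNIV \<times> multi_indices (length qs)"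
  define U1 where "U1 = {(i, j, js) \<in> U. j \<le> i}"
  define U2 where "U2 = {(i, j, js) \<in> U. i < j}"
  define t where "t = (\<lambda>(i, j, js). 1 - x * (a ^ i * (b ^ j * qmonomial qs js)))"
  have "norm (a * b) < 1"
    using assms(1,2) mult_left_le[of "norm b" "norm a"] by (simp add: norm_mult)
  then have small: "\<forall>q\<in>set (a # a * b # qs). norm q < 1" "\<forall>q\<in>set (b # a * b # qs). norm q < 1"
    using assms by auto
  have U1_image: "U1 = (\<lambda>(k, j, js). (k + j, j, js)) ` U"
  proof -
    have "(i, j, js) \<in> (\<lambda>(k, j, js). (k + j, j, js)) ` U" if "j \<le> i" "js \<in> multi_indices (length qs)"
      for i j js
      using that by (intro image_eqI[of _ _ "(i - j, j, js)"]) (auto simp: U_def)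
    then show ?thesis by (auto simp: U_def U1_def)
  qed
  have lim1: "(prod t \<longlongrightarrow> qpoch_conv x (a # a * b # qs)) (finite_subsets_at_top U1)"
    unfolding U1_image using tendsto_qpoch_conv_Cons2[OF small(1), of x]
    by (subst tendsto_prod_finite_subsets_reindex)
      (auto simp: inj_on_def t_def U_def power_add power_mult_distrib ac_simps)
  have U2_image: "U2 = (\<lambda>(m, i, js). (i, i + m + 1, js)) ` U"
  proof -
    have "(i, j, js) \<in> (\<lambda>(m, i, js). (i, i + m + 1, js)) ` U" if "i < j" "js \<in> multi_indices (length qs)"
      for i j js
      using that by (intro image_eqI[of _ _ "(j - i - 1, i, js)"]) (auto simp: U_def)
    then show ?thesis by (auto simp: U_def U2_def)
  qed
  have lim2: "(prod t \<longlongrightarrow> qpoch_conv (b * x) (b # a * b # qs)) (finite_subsets_at_top U2)"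
    unfolding U2_image using tendsto_qpoch_conv_Cons2[OF small(2), of "b * x"]
    by (subst tendsto_prod_finite_subsets_reindex)
      (auto simp: inj_on_def t_def U_def power_add power_mult_distrib ac_simps)
  have "U1 \<union> U2 = U" "U1 \<inter> U2 = {}"
    by (auto simp: U1_def U2_def)
  then have "(prod t \<longlongrightarrow> qpoch_conv x (a # a * b # qs) * qpoch_conv (b * x) (b # a * b # qs))
               (finite_subsets_at_top U)"
    using tendsto_prod_finite_subsets_Un_disjoint[OF lim1 lim2] by simp
  moreover have "(prod t \<longlongrightarrow> qpoch_conv x (a # b # qs)) (finite_subsets_at_top U)"
    using tendsto_qpoch_conv_Cons2[of a b qs x] assms by (simp add: t_def U_def)
  ultimately show ?thesis
    by (metis tendsto_unique finite_subsets_at_top_neq_bot)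
qed

lemma qpoch_swap: "qpoch x (a # b # qs) = qpoch x (b # a # qs)"
  by (simp add: qpoch_def Let_def qpoch_conv_swap ac_simps)

lemma qpoch_inverse_Cons:
  assumes "c \<noteq> 0" "norm c \<noteq> 1"
  shows "qpoch x (inverse c # qs) = inverse (qpoch (c * x) (c # qs))"
proof (cases "norm c < 1")
  case True
  then have "1 < norm (inverse c)"
    using assms(1) by (simp add: norm_inverse one_less_inverse_iff)
  with True show ?thesis
    using assms(1) by (simp add: qpoch_def Let_def ac_simps)
next
  case False
  with assms(2) have "1 < norm c" "norm (inverse c) < 1"
    by (simp_all add: norm_inverse inverse_less_1_iff)
  then show ?thesis
    using assms(1) by (simp add: qpoch_def Let_def field_simps)
qed

lemma qpoch_inverse_Cons_scaled:
  assumes "c \<noteq> 0" "norm c \<noteq> 1"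
  shows "qpoch (inverse c * x) (inverse c # qs) = inverse (qpoch x (c # qs))"
  using qpoch_inverse_Cons[OF assms, of "inverse c * x" qs] assms(1) by (simp add: mult.assoc[symmetric])

lemma qpoch_split_small:
  assumes "norm a < 1" "norm b < 1" "\<forall>q\<in>set qs. norm q \<noteq> 1"
  shows "qpoch x (a # b # qs) = qpoch x (a # a * b # qs) * qpoch (b * x) (b # a * b # qs)"
proof -
  define R where "R = map (\<lambda>q. if 1 < norm q then inverse q else q) qs"
  define X where "X = inverse (prod_list (filter (\<lambda>q. 1 < norm q) qs)) * x"
  have "\<forall>q\<in>set R. norm q < 1"
    using assms(3) by (auto simp: R_def norm_inverse inverse_less_1_iff)
  then have "qpoch_conv X (a # b # R) = qpoch_conv X (a # a * b # R) * qpoch_conv (b * X) (b # a * b # R)"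
    using assms(1,2) by (rule qpoch_conv_split[rotated 2])
  moreover have "norm (a * b) < 1"
    using assms(1,2) mult_left_le[of "norm b" "norm a"] by (simp add: norm_mult)
  ultimately show ?thesis
    using assms(1,2) by (simp add: qpoch_def Let_def R_def X_def ac_simps)
qed

lemma qpoch_split_reflect_first:
  assumes "a \<noteq> 0" "norm a \<noteq> 1"
    and nonzero: "qpoch x (a # b # qs) \<noteq> 0" "qpoch x (a # a * b # qs) \<noteq> 0"
    and reflected: "qpoch (inverse a * x) (inverse a # a * b # qs) =
                    qpoch (inverse a * x) (inverse a # b # qs) * qpoch (b * x) (a * b # b # qs)"
  shows "qpoch x (a # b # qs) = qpoch x (a # a * b # qs) * qpoch (b * x) (b # a * b # qs)"
proof -
  have "inverse (qpoch x (a # a * b # qs)) = inverse (qpoch x (a # b # qs)) * qpoch (b * x) (b # a * b # qs)"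
    using reflected qpoch_swap[of "b * x" "a * b" b qs] assms(1,2)
    by (simp add: qpoch_inverse_Cons_scaled)
  with nonzero show ?thesis
    by (simp add: field_simps)
qed

lemma qpoch_split_reflect_second:
  assumes "b \<noteq> 0" "norm b \<noteq> 1"
    and nonzero: "qpoch x (a # b # qs) \<noteq> 0" "qpoch x (a # a * b # qs) \<noteq> 0"
      "qpoch (b * x) (b # a * b # qs) \<noteq> 0"
    and reflected: "qpoch x (a * b # inverse b # qs) =
                    qpoch x (a * b # a # qs) * qpoch (inverse b * x) (inverse b # a # qs)"
  shows "qpoch x (a # b # qs) = qpoch x (a # a * b # qs) * qpoch (b * x) (b # a * b # qs)"
proof -
  have "inverse (qpoch (b * x) (b # a * b # qs)) = qpoch x (a # a * b # qs) * inverse (qpoch x (a # b # qs))"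
    using reflected qpoch_swap[of x "a * b"] qpoch_swap[of x b a qs] assms(1,2)
    by (simp add: qpoch_inverse_Cons mult.assoc[symmetric])
  with nonzero show ?thesis
    by (simp add: field_simps)
qed

text \<open>Each reflection turns one of a, b, ab of modulus greater than 1 into one of modulus less
  than 1 and permutes the other two, so the induction ends in the case |a|, |b| < 1.\<close>

lemma qpoch_split:
  assumes "a \<noteq> 0" "b \<noteq> 0" "norm a \<noteq> 1" "norm b \<noteq> 1" "norm (a * b) \<noteq> 1"
    and "\<forall>q\<in>set qs. norm q \<noteq> 1"
    and "qpoch x (a # b # qs) \<noteq> 0" "qpoch x (a # a * b # qs) \<noteq> 0" "qpoch (b * x) (b # a * b # qs) \<noteq> 0"
  shows "qpoch x (a # b # qs) = qpoch x (a # a * b # qs) * qpoch (b * x) (b # a * b # qs)"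
  using assms
proof (induction "length (filter (\<lambda>q. 1 < norm q) [a, b, a * b])" arbitrary: x a b rule: less_induct)
  case less
  consider "1 < norm a" | "norm a < 1" "1 < norm b" | "norm a < 1" "norm b < 1"
    using less.prems(3,4) by linarith
  then show ?case
  proof cases
    case 1
    then have "norm (inverse a) < 1"
      by (simp add: norm_inverse inverse_less_1_iff)
    with 1 have fewer: "length (filter (\<lambda>q. 1 < norm q) [inverse a, a * b, b])
                        < length (filter (\<lambda>q. 1 < norm q) [a, b, a * b])"
      by simp
    have "inverse a * (a * b) = b" "a * b * (inverse a * x) = b * x"
      using less.prems(1) by simp_all
    note reflected = less.hyps[where x = "inverse a * x" and a = "inverse a" and b = "a * b",
        unfolded this, OF fewer]
    show ?thesis
      by (rule qpoch_split_reflect_first[OF less.prems(1,3,7,8) reflected])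
        (use less.prems \<open>norm (inverse a) < 1\<close> qpoch_swap[of "b * x" "a * b" b qs]
          in \<open>simp_all add: qpoch_inverse_Cons_scaled\<close>)
  next
    case 2
    then have "norm (inverse b) < 1"
      by (simp add: norm_inverse inverse_less_1_iff)
    with 2 have fewer: "length (filter (\<lambda>q. 1 < norm q) [a * b, inverse b, a])
                        < length (filter (\<lambda>q. 1 < norm q) [a, b, a * b])"
      by simp
    have "a * b * inverse b = a"
      using less.prems(2) by simp
    note reflected = less.hyps[where x = x and a = "a * b" and b = "inverse b", unfolded this, OF fewer]
    show ?thesis
      by (rule qpoch_split_reflect_second[OF less.prems(2,4,7-9) reflected])
        (use less.prems \<open>norm (inverse b) < 1\<close> qpoch_swap[of x "a * b"] qpoch_swap[of x b a qs]
          in \<open>simp_all add: qpoch_inverse_Cons mult.assoc[symmetric]\<close>)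
  next
    case 3
    then show ?thesis
      using less.prems(6) by (rule qpoch_split_small)
  qed
qed

lemma norm_exp_two_pi_i_neq_1: "w \<notin> \<real> \<Longrightarrow> norm (exp (2 * pi * \<i> * w)) \<noteq> 1"
  by (simp add: norm_exp_eq_Re complex_is_Real_iff)

theorem proposition2p2:
  fixes z w0 w1 :: complex and ws :: "complex list"
  defines "x \<equiv> exp (2 * pi * \<i> * z)"
  defines "q \<equiv> (\<lambda>w::complex. exp (2 * pi * \<i> * w))"
  assumes "w0 \<notin> \<real>" and "w1 \<notin> \<real>" and "\<forall>w\<in>set ws. w \<notin> \<real>" and "w0 + w1 \<notin> \<real>"
  assumes "qpoch x (q w0 # q w1 # map q ws) \<noteq> 0"
      and "qpoch x (q w0 # q w0 * q w1 # map q ws) \<noteq> 0"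
      and "qpoch x (inverse (q w1) # q w0 * q w1 # map q ws) \<noteq> 0"
  shows "qpoch x (q w0 # q w1 # map q ws) / qpoch x (q w0 # q w0 * q w1 # map q ws)
         = inverse (qpoch x (inverse (q w1) # q w0 * q w1 # map q ws))"
proof -
  have norm_q: "norm (q w) \<noteq> 1" if "w \<notin> \<real>" for w
    unfolding q_def using that by (rule norm_exp_two_pi_i_neq_1)
  have norm_q01: "norm (q w0 * q w1) \<noteq> 1"
    using norm_q[OF assms(6)] by (simp add: q_def distrib_left exp_add)
  have q_nonzero: "q w \<noteq> 0" for w
    by (simp add: q_def)
  have inv: "qpoch x (inverse (q w1) # q w0 * q w1 # map q ws) =
             inverse (qpoch (q w1 * x) (q w1 # q w0 * q w1 # map q ws))"
    by (rule qpoch_inverse_Cons) (use q_nonzero norm_q assms(4) in auto)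
  have "qpoch x (q w0 # q w1 # map q ws) =
        qpoch x (q w0 # q w0 * q w1 # map q ws) * qpoch (q w1 * x) (q w1 # q w0 * q w1 # map q ws)"
  proof (rule qpoch_split[OF q_nonzero q_nonzero norm_q[OF assms(3)] norm_q[OF assms(4)] norm_q01 _ assms(7,8)])
    show "\<forall>r\<in>set (map q ws). norm r \<noteq> 1"
      using assms(5) norm_q by auto
    show "qpoch (q w1 * x) (q w1 # q w0 * q w1 # map q ws) \<noteq> 0"
      using assms(9) by (simp add: inv)
  qed
  with assms(8) show ?thesis
    by (simp add: inv)
qed

end
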